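(* Let $\epsilon>0$, $R>0$, $\lambda\in C([0,R])$, and let $\mathcal T'=\{(\alpha,\beta):0\le\beta\le\alpha\le 2R,\ \beta\le 2R-\alpha\}$. Define $\bar\lambda=\max_{\rho\in[0,R]}\frac{|\lambda(\rho)|}{4\epsilon}$, $$G_0(\alpha,\beta)=-\int_{\beta/2}^{\alpha/2}\frac{\lambda(\rho)}{2\epsilon}\,d\rho,$$ and for $k\ge1$ $$G_k(\alpha,\beta)=\int_\beta^\alpha\!\!\int_0^\beta\frac{\lambda\left(\frac{\eta-\sigma}{2}\right)}{4\epsilon}G_{k-1}(\eta,\sigma)\,d\sigma\,d\eta+\int_\beta^\alpha\!\!\int_0^\beta\frac{\eta\sigma}{(\eta^2-\sigma^2)^2}G_{k-1}(\eta,\sigma)\,d\sigma\,d\eta.$$ Then $|G_0|\le F_{00}$ on $\mathcal T'$, and for every $n\ge1$ the integrals defining $G_n$ converge absolutely on $\mathcal T'$ and $$|G_n(\alpha,\beta)|\le F_{n0}(\alpha,\beta)+\sum_{i=0}^{n-1}\sum_{j=1}^{n-i}\frac{C_{(n-i)j}}{4^{\,n-i}}F_{ij}(\alpha,\beta)\qquad\text{for all }(\alpha,\beta)\in\mathcal T'.$$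
   Context: For integers $n,k\ge0$ and $0\le\beta<\alpha$, $F_{nk}(\alpha,\beta)=\frac{\bar\lambda^{n+1}\alpha^n\beta^n}{n!(n+1)!}(\alpha-\beta)\frac{\log^k\left(\frac{\alpha+\beta}{\alpha-\beta}\right)}{k!}$, extended continuously by $0$ on the diagonal $\alpha=\beta$. The numbers $C_{ij}$ (Catalan's triangle) are defined by: $C_{11}=1$; $C_{i0}=0$; $C_{ij}=0$ if $j>i$; and $C_{ij}=C_{(i-1)(j-1)}+C_{i(j+1)}$ for all other index pairs ($i\ge2$, $1\le j\le i$). *)

theory Defs
  imports "HOL-Analysis.Analysis"
begin

definition Fnk :: "real \<Rightarrow> nat \<Rightarrow> nat \<Rightarrow> real \<Rightarrow> real \<Rightarrow> real" where
  "Fnk lbar n k \<alpha> \<beta> =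
     (if \<alpha> = \<beta> then 0
      else lbar ^ (n + 1) * \<alpha> ^ n * \<beta> ^ n / (fact n * fact (n + 1)) * (\<alpha> - \<beta>)
           * (ln ((\<alpha> + \<beta>) / (\<alpha> - \<beta>))) ^ k / fact k)"

function Cat :: "nat \<Rightarrow> nat \<Rightarrow> nat" where
  "Cat i j = (if j = 0 then 0 else if j > i then 0 else if i = 1 \<and> j = 1 then 1
              else Cat (i - 1) (j - 1) + Cat i (j + 1))"
  by pat_completeness auto
termination
  by (relation "measures [fst, \<lambda>(i, j). Suc i - j]") auto

definition Tprime :: "real \<Rightarrow> (real \<times> real) set" where
  "Tprime R = {(\<alpha>, \<beta>). 0 \<le> \<beta> \<and> \<beta> \<le> \<alpha> \<and> \<alpha> \<le> 2 * R \<and> \<beta> \<le> 2 * R - \<alpha>}"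

definition ker1 :: "real \<Rightarrow> (real \<Rightarrow> real) \<Rightarrow> real \<Rightarrow> real \<Rightarrow> real" where
  "ker1 \<epsilon> lam \<eta> \<sigma> = lam ((\<eta> - \<sigma>) / 2) / (4 * \<epsilon>)"

definition ker2 :: "real \<Rightarrow> real \<Rightarrow> real" where
  "ker2 \<eta> \<sigma> = \<eta> * \<sigma> / (\<eta>\<^sup>2 - \<sigma>\<^sup>2)\<^sup>2"

fun G :: "real \<Rightarrow> (real \<Rightarrow> real) \<Rightarrow> nat \<Rightarrow> real \<Rightarrow> real \<Rightarrow> real" where
  "G \<epsilon> lam 0 \<alpha> \<beta> = - (LBINT \<rho>=\<beta>/2..\<alpha>/2. lam \<rho> / (2 * \<epsilon>))"
| "G \<epsilon> lam (Suc k) \<alpha> \<beta> =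
     (LBINT \<eta>=\<beta>..\<alpha>. (LBINT \<sigma>=0..\<beta>. ker1 \<epsilon> lam \<eta> \<sigma> * G \<epsilon> lam k \<eta> \<sigma>))
   + (LBINT \<eta>=\<beta>..\<alpha>. (LBINT \<sigma>=0..\<beta>. ker2 \<eta> \<sigma> * G \<epsilon> lam k \<eta> \<sigma>))"

end

theory Submission
  imports Defs "HOL-Real_Asymp.Real_Asymp"
begin

text \<open>
  Write F_ij = c_i (x y)^i (x - y) L^j / j! with L = ln ((x + y) / (x - y)). A direct computation
  gives the hyperbolic identity

    d_y d_x F_ij = lbar F_(i-1)j + 4 k2 (F_i(j-1) - F_i(j-2)),   k2 = x y / (x^2 - y^2)^2,

  and the recursion of Catalan's triangle is exactly what makes the weighted sum
  B_n = sum C_(n-i)j / 4^(n-i) F_ij on the right-hand side of the theorem satisfy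
  d_y d_x B_(n+1) = (lbar + k2) B_n. Since B_(n+1) vanishes on the diagonal and d_x B_(n+1) vanishes
  at y = 0, integrating twice gives the exact identity

    int_beta^alpha int_0^beta (lbar + k2) B_n = B_(n+1)(alpha, beta).

  On T' the first kernel is bounded by lbar, so induction on n gives |G_n| <= B_n, and the same
  identity shows that (lbar + k2) B_(n-1) is an integrable majorant of both integrands of G_n.
\<close>

section \<open>The comparison functions in product form\<close>

definition log_ratio :: "real \<Rightarrow> real \<Rightarrow> real" where
  "log_ratio x y = ln ((x + y) / (x - y))"

definition log_ratio_dx :: "real \<Rightarrow> real \<Rightarrow> real" where
  "log_ratio_dx x y = - 2 * y / (x\<^sup>2 - y\<^sup>2)"

definition log_ratio_dy :: "real \<Rightarrow> real \<Rightarrow> real" where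
  "log_ratio_dy x y = 2 * x / (x\<^sup>2 - y\<^sup>2)"

definition log_ratio_dxdy :: "real \<Rightarrow> real \<Rightarrow> real" where
  "log_ratio_dxdy x y = - 2 * (x\<^sup>2 + y\<^sup>2) / (x\<^sup>2 - y\<^sup>2)\<^sup>2"

definition diag_poly :: "nat \<Rightarrow> real \<Rightarrow> real \<Rightarrow> real" where
  "diag_poly i x y = x ^ i * y ^ i * (x - y)"

definition diag_poly_dx :: "nat \<Rightarrow> real \<Rightarrow> real \<Rightarrow> real" where
  "diag_poly_dx i x y = real i * x ^ (i - 1) * y ^ i * (x - y) + x ^ i * y ^ i"

definition diag_poly_dy :: "nat \<Rightarrow> real \<Rightarrow> real \<Rightarrow> real" where
  "diag_poly_dy i x y = real i * x ^ i * y ^ (i - 1) * (x - y) - x ^ i * y ^ i"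

definition diag_poly_dxdy :: "nat \<Rightarrow> real \<Rightarrow> real \<Rightarrow> real" where
  "diag_poly_dxdy i x y = real i * (real i + 1) * x ^ (i - 1) * y ^ (i - 1) * (x - y)"

definition pow_fact :: "nat \<Rightarrow> real \<Rightarrow> real" where
  "pow_fact j t = t ^ j / fact j"

definition pow_fact_deriv :: "nat \<Rightarrow> real \<Rightarrow> real" where
  "pow_fact_deriv j t = (if j = 0 then 0 else pow_fact (j - 1) t)"

definition Fcoeff :: "real \<Rightarrow> nat \<Rightarrow> real" where
  "Fcoeff l i = l ^ (i + 1) / (fact i * fact (i + 1))"

lemma Fnk_eq: "Fnk l i j x y = Fcoeff l i * diag_poly i x y * pow_fact j (log_ratio x y)"
  unfolding Fnk_def Fcoeff_def diag_poly_def pow_fact_def log_ratio_def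
  by (simp add: field_simps)

lemma sq_diff_pos: "\<bar>y\<bar> < x \<Longrightarrow> x\<^sup>2 - y\<^sup>2 > (0::real)"
  by (simp add: abs_less_iff power2_eq_square square_diff_square_factored)

lemma DERIV_log_ratio_x: "\<bar>y\<bar> < x \<Longrightarrow> DERIV (\<lambda>x. log_ratio x y) x :> log_ratio_dx x y"
  unfolding log_ratio_def log_ratio_dx_def
  by (rule derivative_eq_intros refl | simp)+ (simp add: field_simps power2_eq_square)

lemma DERIV_log_ratio_y: "\<bar>y\<bar> < x \<Longrightarrow> DERIV (\<lambda>y. log_ratio x y) y :> log_ratio_dy x y"
  unfolding log_ratio_def log_ratio_dy_def
  by (rule derivative_eq_intros refl | simp)+ (simp add: field_simps power2_eq_square)

lemma DERIV_log_ratio_dx_y: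
  assumes "\<bar>y\<bar> < x"
  shows "DERIV (\<lambda>y. log_ratio_dx x y) y :> log_ratio_dxdy x y"
proof -
  have nz: "x\<^sup>2 - y\<^sup>2 \<noteq> 0" using sq_diff_pos[OF assms] by simp
  have "DERIV (\<lambda>y. log_ratio_dx x y) y :> (- 2 * (x\<^sup>2 - y\<^sup>2) - (- 2 * y) * (- (2 * y))) / (x\<^sup>2 - y\<^sup>2)\<^sup>2"
    unfolding log_ratio_dx_def using nz
    by (intro derivative_eq_intros refl) (auto simp: power2_eq_square)
  moreover have "(- 2 * (x\<^sup>2 - y\<^sup>2) - (- 2 * y) * (- (2 * y))) / (x\<^sup>2 - y\<^sup>2)\<^sup>2 = log_ratio_dxdy x y"
    unfolding log_ratio_dxdy_def by (simp add: algebra_simps power2_eq_square)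
  ultimately show ?thesis by simp
qed

lemma DERIV_diag_poly_x: "DERIV (\<lambda>x. diag_poly i x y) x :> diag_poly_dx i x y"
  unfolding diag_poly_def diag_poly_dx_def
  by (auto intro!: derivative_eq_intros simp: algebra_simps)

lemma DERIV_diag_poly_y: "DERIV (\<lambda>y. diag_poly i x y) y :> diag_poly_dy i x y"
  unfolding diag_poly_def diag_poly_dy_def
  by (auto intro!: derivative_eq_intros simp: algebra_simps)

lemma DERIV_diag_poly_dx_y: "DERIV (\<lambda>y. diag_poly_dx i x y) y :> diag_poly_dxdy i x y"
proof (cases i)
  case 0
  then show ?thesis
    unfolding diag_poly_dx_def diag_poly_dxdy_def by (auto intro!: derivative_eq_intros)
next
  case (Suc k)
  show ?thesis
    unfolding diag_poly_dx_def diag_poly_dxdy_def Suc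
    by (rule derivative_eq_intros refl)+ (simp add: algebra_simps)
qed

lemma DERIV_pow_fact: "DERIV (pow_fact j) t :> pow_fact_deriv j t"
proof (cases j)
  case 0
  then show ?thesis unfolding pow_fact_def pow_fact_deriv_def by (auto intro!: derivative_eq_intros)
next
  case (Suc k)
  have "DERIV (\<lambda>t. t ^ j / fact j) t :> real j * t ^ (j - 1) / fact j"
    by (auto intro!: derivative_eq_intros)
  moreover have "real j * t ^ (j - 1) / fact j = t ^ k / fact k"
    using Suc by (simp del: of_nat_Suc)
  ultimately show ?thesis unfolding pow_fact_def pow_fact_deriv_def using Suc by simp
qed

lemma DERIV_pow_fact_deriv: "DERIV (pow_fact_deriv j) t :> pow_fact_deriv (j - 1) t"
proof (cases j)
  case 0
  then show ?thesis unfolding pow_fact_deriv_def by (auto intro!: derivative_eq_intros)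
next
  case (Suc k)
  then have "pow_fact_deriv j = pow_fact k" by (auto simp: pow_fact_deriv_def)
  then show ?thesis using DERIV_pow_fact Suc by simp
qed

lemma diag_poly_log_ratio_mixed:
  assumes "\<bar>y\<bar> < x"
  shows "diag_poly_dx i x y * log_ratio_dy x y + diag_poly_dy i x y * log_ratio_dx x y
           + diag_poly i x y * log_ratio_dxdy x y = 4 * ker2 x y * diag_poly i x y"
proof -
  define d where "d = x\<^sup>2 - y\<^sup>2"
  have d: "d \<noteq> 0" using sq_diff_pos[OF assms] by (simp add: d_def)
  have "2 * x * diag_poly_dx i x y - 2 * y * diag_poly_dy i x y = 2 * x ^ i * y ^ i * (x + y)"
    by (cases i) (simp_all add: diag_poly_dx_def diag_poly_dy_def algebra_simps)
  then have "diag_poly_dx i x y * log_ratio_dy x y + diag_poly_dy i x y * log_ratio_dx x y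
           + diag_poly i x y * log_ratio_dxdy x y
         = (d * (2 * x ^ i * y ^ i * (x + y)) - 2 * (x\<^sup>2 + y\<^sup>2) * (x ^ i * y ^ i * (x - y))) / d\<^sup>2"
    unfolding log_ratio_dx_def log_ratio_dy_def log_ratio_dxdy_def diag_poly_def d_def[symmetric]
    using d by (simp add: field_simps power2_eq_square)
  also have "\<dots> = 4 * (x * y / d\<^sup>2) * (x ^ i * y ^ i * (x - y))"
    unfolding d_def using d by (simp add: field_simps power2_eq_square)
  finally show ?thesis unfolding ker2_def diag_poly_def d_def .
qed

lemma diag_poly_log_ratio_cross:
  "\<bar>y\<bar> < x \<Longrightarrow> diag_poly i x y * log_ratio_dy x y * log_ratio_dx x y = - 4 * ker2 x y * diag_poly i x y"
  unfolding diag_poly_def log_ratio_dx_def log_ratio_dy_def ker2_def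
  using sq_diff_pos[of y x] by (simp add: field_simps power2_eq_square)

lemma Fcoeff_Suc: "Fcoeff l (Suc i) = l * Fcoeff l i / (real (i + 1) * real (i + 2))"
  by (simp add: Fcoeff_def field_simps)

lemma Fcoeff_diag_poly_dxdy:
  "Fcoeff l i * diag_poly_dxdy i x y = (if i = 0 then 0 else l * (Fcoeff l (i - 1) * diag_poly (i - 1) x y))"
proof (cases i)
  case (Suc k)
  have "diag_poly_dxdy i x y = real (k + 1) * real (k + 2) * diag_poly k x y"
    unfolding diag_poly_dxdy_def diag_poly_def Suc by simp
  then show ?thesis using Fcoeff_Suc[of l k] Suc by simp
qed (simp add: diag_poly_dxdy_def)

definition Fnk_dx :: "real \<Rightarrow> nat \<Rightarrow> nat \<Rightarrow> real \<Rightarrow> real \<Rightarrow> real" where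
  "Fnk_dx l i j x y = Fcoeff l i * (diag_poly_dx i x y * pow_fact j (log_ratio x y)
                        + diag_poly i x y * (pow_fact_deriv j (log_ratio x y) * log_ratio_dx x y))"

text \<open>The mixed derivative of \<open>F\<close> in the form obtained from \<open>diag_poly_log_ratio_mixed\<close>,
  \<open>diag_poly_log_ratio_cross\<close> and \<open>Fcoeff_diag_poly_dxdy\<close>.\<close>

definition Fnk_dxdy :: "real \<Rightarrow> nat \<Rightarrow> nat \<Rightarrow> real \<Rightarrow> real \<Rightarrow> real" where
  "Fnk_dxdy l i j x y = (if i = 0 then 0 else l * Fnk l (i - 1) j x y)
     + 4 * ker2 x y * ((if j = 0 then 0 else Fnk l i (j - 1) x y) - (if j < 2 then 0 else Fnk l i (j - 2) x y))"

lemma DERIV_Fnk_x: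
  assumes "\<bar>y\<bar> < x"
  shows "DERIV (\<lambda>x. Fnk l i j x y) x :> Fnk_dx l i j x y"
proof -
  have "DERIV (\<lambda>x. pow_fact j (log_ratio x y)) x :> pow_fact_deriv j (log_ratio x y) * log_ratio_dx x y"
    by (rule DERIV_chain2[OF DERIV_pow_fact DERIV_log_ratio_x[OF assms]])
  from DERIV_cmult[OF DERIV_mult[OF DERIV_diag_poly_x this], of "Fcoeff l i"]
  have "DERIV (\<lambda>x. Fcoeff l i * (diag_poly i x y * pow_fact j (log_ratio x y))) x :> Fnk_dx l i j x y"
    unfolding Fnk_dx_def by (rule DERIV_cong) (simp add: algebra_simps)
  then show ?thesis unfolding Fnk_eq by (simp add: mult.assoc)
qed

lemma DERIV_Fnk_dx_y:
  assumes "\<bar>y\<bar> < x"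
  shows "DERIV (\<lambda>y. Fnk_dx l i j x y) y :> Fnk_dxdy l i j x y"
proof -
  let ?L = "log_ratio x y"
  have pf: "DERIV (\<lambda>y. pow_fact j (log_ratio x y)) y :> pow_fact_deriv j ?L * log_ratio_dy x y"
    by (rule DERIV_chain2[OF DERIV_pow_fact DERIV_log_ratio_y[OF assms]])
  have pfd: "DERIV (\<lambda>y. pow_fact_deriv j (log_ratio x y)) y :> pow_fact_deriv (j - 1) ?L * log_ratio_dy x y"
    by (rule DERIV_chain2[OF DERIV_pow_fact_deriv DERIV_log_ratio_y[OF assms]])
  define D where "D =
      Fcoeff l i * ((diag_poly_dxdy i x y * pow_fact j ?L + diag_poly_dx i x y * (pow_fact_deriv j ?L * log_ratio_dy x y))
        + (diag_poly_dy i x y * (pow_fact_deriv j ?L * log_ratio_dx x y)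
           + diag_poly i x y * (pow_fact_deriv (j - 1) ?L * log_ratio_dy x y * log_ratio_dx x y
                                + pow_fact_deriv j ?L * log_ratio_dxdy x y)))"
  have "DERIV (\<lambda>y. Fnk_dx l i j x y) y :> D"
    unfolding Fnk_dx_def D_def
    using DERIV_cmult[OF DERIV_add[OF DERIV_mult[OF DERIV_diag_poly_dx_y pf]
            DERIV_mult[OF DERIV_diag_poly_y DERIV_mult[OF pfd DERIV_log_ratio_dx_y[OF assms]]]], of "Fcoeff l i"]
    by (rule DERIV_cong) (simp add: algebra_simps)
  moreover have "D = Fcoeff l i * diag_poly_dxdy i x y * pow_fact j ?L
       + Fcoeff l i * pow_fact_deriv j ?L * (diag_poly_dx i x y * log_ratio_dy x y
           + diag_poly_dy i x y * log_ratio_dx x y + diag_poly i x y * log_ratio_dxdy x y)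
       + Fcoeff l i * pow_fact_deriv (j - 1) ?L * (diag_poly i x y * log_ratio_dy x y * log_ratio_dx x y)"
    unfolding D_def by (simp add: algebra_simps)
  also have "\<dots> = Fnk_dxdy l i j x y"
    unfolding diag_poly_log_ratio_mixed[OF assms] diag_poly_log_ratio_cross[OF assms]
      Fcoeff_diag_poly_dxdy Fnk_dxdy_def Fnk_eq pow_fact_deriv_def
    by (auto simp: algebra_simps numeral_2_eq_2)
  ultimately show ?thesis by simp
qed

section \<open>Catalan coefficients\<close>

declare Cat.simps[simp del]

lemma Cat_0_right: "Cat m 0 = 0"
  by (subst Cat.simps) simp

lemma Cat_eq_0_if_gt: "m < j \<Longrightarrow> Cat m j = 0"
  by (subst Cat.simps) simp

lemma Cat_1_1 [simp]: "Cat (Suc 0) (Suc 0) = 1"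
  by (subst Cat.simps) simp

lemma Cat_Suc_Suc:
  "j \<le> m \<Longrightarrow> (m, j) \<noteq> (0, 0) \<Longrightarrow> Cat (Suc m) (Suc j) = Cat m j + Cat (Suc m) (Suc (Suc j))"
  by (subst Cat.simps) auto

text \<open>Taking \<open>cat_coeff 0\<close> to be the Kronecker delta at \<open>0\<close> absorbs the separate term F_n0 of
  the theorem into the double sum defining \<open>majorant\<close>.\<close>

definition cat_coeff :: "nat \<Rightarrow> nat \<Rightarrow> real" where
  "cat_coeff m j = (if m = 0 then (if j = 0 then 1 else 0) else real (Cat m j) / 4 ^ m)"

lemma cat_coeff_eq_0_if_gt: "m < j \<Longrightarrow> cat_coeff m j = 0"
  by (simp add: cat_coeff_def Cat_eq_0_if_gt)

lemma cat_coeff_nonneg: "cat_coeff m j \<ge> 0"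
  by (simp add: cat_coeff_def)

lemma cat_coeff_diff: "cat_coeff (Suc m) (Suc j) - cat_coeff (Suc m) (Suc (Suc j)) = cat_coeff m j / 4"
proof (cases "m = 0 \<and> j = 0")
  case True
  then show ?thesis by (simp add: cat_coeff_def Cat_eq_0_if_gt)
next
  case not_corner: False
  show ?thesis
  proof (cases "j \<le> m")
    case True
    then have "Cat (Suc m) (Suc j) = Cat m j + Cat (Suc m) (Suc (Suc j))"
      using not_corner by (intro Cat_Suc_Suc) auto
    moreover have "m \<noteq> 0" using True not_corner by auto
    ultimately show ?thesis by (simp add: cat_coeff_def field_simps)
  next
    case False
    then show ?thesis by (auto simp: cat_coeff_def Cat_eq_0_if_gt)
  qed
qed

lemma sum_atMost_Suc_shift_pred:
  "(\<Sum>j\<le>Suc N. c j * (if j = 0 then 0 else g (j - 1))) = (\<Sum>j\<le>N. c (Suc j) * (g j :: real))"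
  by (subst sum.atMost_Suc_shift) simp

lemma sum_atMost_Suc_shift_pred2:
  assumes "c (Suc (Suc N)) = 0"
  shows "(\<Sum>j\<le>Suc N. c j * (if j < 2 then 0 else g (j - 2))) = (\<Sum>j\<le>N. c (Suc (Suc j)) * (g j :: real))"
proof (cases N)
  case 0
  then show ?thesis using assms by (simp add: numeral_2_eq_2)
next
  case (Suc M)
  have "(\<Sum>j\<le>Suc N. c j * (if j < 2 then 0 else g (j - 2))) = (\<Sum>j\<le>M. c (Suc (Suc j)) * g j)"
    unfolding Suc sum.atMost_Suc_shift[of _ "Suc M"] sum.atMost_Suc_shift[of _ M]
    by (simp add: numeral_2_eq_2)
  also have "\<dots> = (\<Sum>j\<le>N. c (Suc (Suc j)) * g j)"
    using assms Suc by simp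
  finally show ?thesis .
qed

lemma sum_cat_coeff_shift_row:
  "(\<Sum>i\<le>Suc n. \<Sum>j\<le>Suc n. cat_coeff (Suc n - i) j * (if i = 0 then 0 else f (i - 1) j))
     = (\<Sum>i\<le>n. \<Sum>j\<le>n. cat_coeff (n - i) j * (f i j :: real))"
proof -
  have "(\<Sum>i\<le>Suc n. \<Sum>j\<le>Suc n. cat_coeff (Suc n - i) j * (if i = 0 then 0 else f (i - 1) j))
      = (\<Sum>i\<le>n. \<Sum>j\<le>Suc n. cat_coeff (n - i) j * f i j)"
    by (subst sum.atMost_Suc_shift) simp
  also have "\<dots> = (\<Sum>i\<le>n. \<Sum>j\<le>n. cat_coeff (n - i) j * f i j)"
    by (rule sum.cong[OF refl]) (simp add: cat_coeff_eq_0_if_gt)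
  finally show ?thesis .
qed

lemma sum_cat_coeff_shift_col:
  "(\<Sum>i\<le>Suc n. \<Sum>j\<le>Suc n. cat_coeff (Suc n - i) j
        * ((if j = 0 then 0 else f i (j - 1)) - (if j < 2 then 0 else f i (j - 2))))
     = (\<Sum>i\<le>n. \<Sum>j\<le>n. cat_coeff (n - i) j * (f i j :: real)) / 4"
proof -
  have inner: "(\<Sum>j\<le>Suc n. cat_coeff m j * ((if j = 0 then 0 else f i (j - 1)) - (if j < 2 then 0 else f i (j - 2))))
      = (\<Sum>j\<le>n. (cat_coeff m (Suc j) - cat_coeff m (Suc (Suc j))) * f i j)" if "m \<le> Suc n" for m i
    using sum_atMost_Suc_shift_pred[where c = "cat_coeff m" and N = n and g = "f i"]
      sum_atMost_Suc_shift_pred2[where c = "cat_coeff m" and N = n and g = "f i"] that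
    by (simp add: right_diff_distrib left_diff_distrib sum_subtractf cat_coeff_eq_0_if_gt)
  have "(\<Sum>i\<le>Suc n. \<Sum>j\<le>Suc n. cat_coeff (Suc n - i) j
        * ((if j = 0 then 0 else f i (j - 1)) - (if j < 2 then 0 else f i (j - 2))))
      = (\<Sum>i\<le>Suc n. \<Sum>j\<le>n. (cat_coeff (Suc n - i) (Suc j) - cat_coeff (Suc n - i) (Suc (Suc j))) * f i j)"
    by (rule sum.cong[OF refl], rule inner) simp
  also have "\<dots> = (\<Sum>i\<le>n. \<Sum>j\<le>n. (cat_coeff (Suc n - i) (Suc j) - cat_coeff (Suc n - i) (Suc (Suc j))) * f i j)"
    by (simp add: cat_coeff_def)
  also have "\<dots> = (\<Sum>i\<le>n. \<Sum>j\<le>n. cat_coeff (n - i) j / 4 * f i j)"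
    by (intro sum.cong refl) (simp add: cat_coeff_diff Suc_diff_le del: of_nat_Suc)
  finally show ?thesis by (simp add: sum_divide_distrib)
qed

section \<open>The majorant and its mixed derivative\<close>

definition majorant :: "real \<Rightarrow> nat \<Rightarrow> real \<Rightarrow> real \<Rightarrow> real" where
  "majorant l n x y = (\<Sum>i\<le>n. \<Sum>j\<le>n. cat_coeff (n - i) j * Fnk l i j x y)"

definition majorant_dx :: "real \<Rightarrow> nat \<Rightarrow> real \<Rightarrow> real \<Rightarrow> real" where
  "majorant_dx l n x y = (\<Sum>i\<le>n. \<Sum>j\<le>n. cat_coeff (n - i) j * Fnk_dx l i j x y)"

lemma majorant_eq_Fnk_sum:
  "majorant l n x y = Fnk l n 0 x y + (\<Sum>i<n. \<Sum>j=1..n-i. real (Cat (n - i) j) / 4 ^ (n - i) * Fnk l i j x y)"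
proof -
  have row: "(\<Sum>j\<le>n. cat_coeff (n - i) j * Fnk l i j x y)
      = (\<Sum>j=1..n-i. real (Cat (n - i) j) / 4 ^ (n - i) * Fnk l i j x y)" if "i < n" for i
  proof -
    have "(\<Sum>j\<le>n. cat_coeff (n - i) j * Fnk l i j x y) = (\<Sum>j=1..n-i. cat_coeff (n - i) j * Fnk l i j x y)"
      using that by (intro sum.mono_neutral_right)
        (auto simp: cat_coeff_def Cat_0_right Cat_eq_0_if_gt not_le)
    then show ?thesis using that by (simp add: cat_coeff_def)
  qed
  have "majorant l n x y = (\<Sum>i<n. \<Sum>j\<le>n. cat_coeff (n - i) j * Fnk l i j x y)
      + (\<Sum>j\<le>n. cat_coeff 0 j * Fnk l n j x y)"
    unfolding majorant_def by (simp add: lessThan_Suc_atMost[symmetric])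
  also have "(\<Sum>j\<le>n. cat_coeff 0 j * Fnk l n j x y) = (\<Sum>j\<le>n. if j = 0 then Fnk l n j x y else 0)"
    by (intro sum.cong refl) (simp add: cat_coeff_def)
  finally show ?thesis by (simp add: row)
qed

lemma majorant_0: "majorant l 0 x y = l * (x - y)"
  by (simp add: majorant_def cat_coeff_def Fnk_eq Fcoeff_def diag_poly_def pow_fact_def)

lemma DERIV_majorant_x:
  "\<bar>y\<bar> < x \<Longrightarrow> DERIV (\<lambda>x. majorant l n x y) x :> majorant_dx l n x y"
  unfolding majorant_def majorant_dx_def by (intro DERIV_sum DERIV_cmult DERIV_Fnk_x)

lemma DERIV_majorant_dx_y:
  assumes "\<bar>y\<bar> < x"
  shows "DERIV (\<lambda>y. majorant_dx l (Suc n) x y) y :> (l + ker2 x y) * majorant l n x y"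
proof -
  let ?c = "\<lambda>i j. cat_coeff (Suc n - i) j"
  let ?A = "\<lambda>i j. if i = 0 then 0 else l * Fnk l (i - 1) j x y"
  let ?B = "\<lambda>i j. (if j = 0 then 0 else Fnk l i (j - 1) x y) - (if j < 2 then 0 else Fnk l i (j - 2) x y)"
  have split: "?c i j * Fnk_dxdy l i j x y = ?c i j * ?A i j + 4 * ker2 x y * (?c i j * ?B i j)" for i j
    unfolding Fnk_dxdy_def by (simp add: algebra_simps)
  have A: "(\<Sum>i\<le>Suc n. \<Sum>j\<le>Suc n. ?c i j * ?A i j) = l * majorant l n x y"
    unfolding sum_cat_coeff_shift_row[where f = "\<lambda>i j. l * Fnk l i j x y"] majorant_def sum_distrib_left
    by (simp add: mult_ac)
  have B: "(\<Sum>i\<le>Suc n. \<Sum>j\<le>Suc n. ?c i j * ?B i j) = majorant l n x y / 4"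
    unfolding sum_cat_coeff_shift_col[where f = "\<lambda>i j. Fnk l i j x y"] majorant_def ..
  have "DERIV (\<lambda>y. majorant_dx l (Suc n) x y) y :> (\<Sum>i\<le>Suc n. \<Sum>j\<le>Suc n. ?c i j * Fnk_dxdy l i j x y)"
    unfolding majorant_dx_def by (intro DERIV_sum DERIV_cmult DERIV_Fnk_dx_y assms)
  also have "(\<Sum>i\<le>Suc n. \<Sum>j\<le>Suc n. ?c i j * Fnk_dxdy l i j x y) = (l + ker2 x y) * majorant l n x y"
    unfolding split sum.distrib sum_distrib_left[symmetric] A B by (simp add: algebra_simps)
  finally show ?thesis .
qed

section \<open>Boundary values and the double integral of the majorant\<close>

lemma ker2_nonneg: "0 \<le> y \<Longrightarrow> 0 \<le> x \<Longrightarrow> ker2 x y \<ge> 0"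
  unfolding ker2_def by simp

lemma log_ratio_nonneg: "0 \<le> y \<Longrightarrow> y < x \<Longrightarrow> log_ratio x y \<ge> 0"
  unfolding log_ratio_def by (auto intro!: ln_ge_zero simp: field_simps)

lemma Fnk_nonneg: "l \<ge> 0 \<Longrightarrow> 0 \<le> y \<Longrightarrow> y \<le> x \<Longrightarrow> Fnk l i j x y \<ge> 0"
  using log_ratio_nonneg[of y x]
  by (cases "x = y") (auto simp: Fnk_eq Fcoeff_def diag_poly_def pow_fact_def intro!: mult_nonneg_nonneg)

lemma majorant_nonneg: "l \<ge> 0 \<Longrightarrow> 0 \<le> y \<Longrightarrow> y \<le> x \<Longrightarrow> majorant l n x y \<ge> 0"
  unfolding majorant_def by (intro sum_nonneg mult_nonneg_nonneg cat_coeff_nonneg Fnk_nonneg)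

lemma ker2_measurable [measurable (raw)]:
  assumes [measurable]: "f \<in> borel_measurable M" "g \<in> borel_measurable M"
  shows "(\<lambda>x. ker2 (f x) (g x)) \<in> borel_measurable M"
  unfolding ker2_def by measurable

lemma majorant_measurable [measurable (raw)]:
  assumes [measurable]: "f \<in> borel_measurable M" "g \<in> borel_measurable M"
  shows "(\<lambda>x. majorant l n (f x) (g x)) \<in> borel_measurable M"
  unfolding majorant_def Fnk_eq Fcoeff_def diag_poly_def pow_fact_def log_ratio_def by measurable

lemma majorant_dx_Suc_at_0: "x > 0 \<Longrightarrow> majorant_dx l (Suc n) x 0 = 0"
  unfolding majorant_dx_def
  by (intro sum.neutral ballI)
     (auto simp: cat_coeff_def Cat_0_right Fnk_dx_def diag_poly_dx_def diag_poly_def pow_fact_def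
        log_ratio_def log_ratio_dx_def zero_power)

lemma majorant_dx_Suc_nonneg:
  assumes "l \<ge> 0" "0 \<le> y" "y < x"
  shows "majorant_dx l (Suc n) x y \<ge> 0"
proof -
  have "majorant_dx l (Suc n) x 0 \<le> majorant_dx l (Suc n) x y"
  proof (rule DERIV_nonneg_imp_nondecreasing[of 0 y])
    fix t assume "0 \<le> t" "t \<le> y"
    with assms show "\<exists>d. DERIV (\<lambda>y. majorant_dx l (Suc n) x y) t :> d \<and> 0 \<le> d"
      by (intro exI[of _ "(l + ker2 x t) * majorant l n x t"] conjI DERIV_majorant_dx_y
          mult_nonneg_nonneg add_nonneg_nonneg majorant_nonneg ker2_nonneg) auto
  qed (use assms in auto)
  then show ?thesis using majorant_dx_Suc_at_0[of x l n] assms by simp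
qed

lemma tendsto_diag_times_log_ratio_power:
  assumes "y \<ge> 0"
  shows "((\<lambda>x. (x - y) * log_ratio x y ^ j) \<longlongrightarrow> 0) (at_right y)"
proof (cases "y = 0")
  case True
  have "eventually (\<lambda>x. x * 0 ^ j = (x - y) * log_ratio x y ^ j) (at_right y)"
    unfolding True eventually_at_right_field by (rule exI[of _ 1]) (auto simp: log_ratio_def)
  moreover have "((\<lambda>x. x * 0 ^ j) \<longlongrightarrow> (0::real)) (at_right y)"
    unfolding True by (auto intro!: tendsto_eq_intros)
  ultimately show ?thesis by (rule Lim_transform_eventually[rotated])
next
  case False
  then have "y > 0" using assms by simp
  then have "((\<lambda>t. t * ln ((2 * y + t) / t) ^ j) \<longlongrightarrow> 0) (at_right 0)"
    by real_asymp
  moreover have "(\<lambda>t. (t + y - y) * log_ratio (t + y) y ^ j) = (\<lambda>t. t * ln ((2 * y + t) / t) ^ j)"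
    by (simp add: log_ratio_def algebra_simps)
  ultimately show ?thesis unfolding filterlim_at_right_to_0[where a = y] by simp
qed

lemma tendsto_majorant_diagonal:
  assumes "y \<ge> 0"
  shows "((\<lambda>x. majorant l n x y) \<longlongrightarrow> 0) (at_right y)"
proof -
  have "((\<lambda>x. Fnk l i j x y) \<longlongrightarrow> 0) (at_right y)" for i j
  proof -
    have "Fnk l i j x y = Fcoeff l i * x ^ i * y ^ i * ((x - y) * log_ratio x y ^ j) / fact j" for x
      by (simp add: Fnk_eq diag_poly_def pow_fact_def)
    moreover have "((\<lambda>x. Fcoeff l i * x ^ i * y ^ i * ((x - y) * log_ratio x y ^ j) / fact j)
        \<longlongrightarrow> Fcoeff l i * y ^ i * y ^ i * 0 / fact j) (at_right y)"
      by (intro tendsto_intros tendsto_diag_times_log_ratio_power assms) simp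
    ultimately show ?thesis by simp
  qed
  then have "((\<lambda>x. majorant l n x y) \<longlongrightarrow> (\<Sum>i\<le>n. \<Sum>j\<le>n. cat_coeff (n - i) j * 0)) (at_right y)"
    unfolding majorant_def by (intro tendsto_intros)
  then show ?thesis by simp
qed

lemma isCont_Fnk_dx:
  assumes "\<bar>y\<bar> < x"
  shows "isCont (\<lambda>x. Fnk_dx l i j x y) x"
proof -
  have log_ratio: "isCont (\<lambda>x. log_ratio x y) x"
    using DERIV_log_ratio_x[OF assms] by (rule DERIV_isCont)
  have "isCont (\<lambda>x. pow_fact j (log_ratio x y)) x"
    by (rule isCont_o2[OF log_ratio DERIV_isCont[OF DERIV_pow_fact]])
  moreover have "isCont (\<lambda>x. pow_fact_deriv j (log_ratio x y)) x"
    by (rule isCont_o2[OF log_ratio DERIV_isCont[OF DERIV_pow_fact_deriv]])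
  moreover have "isCont (\<lambda>x. log_ratio_dx x y) x"
    unfolding log_ratio_dx_def using sq_diff_pos[OF assms] by (intro continuous_intros) auto
  ultimately show ?thesis
    unfolding Fnk_dx_def diag_poly_dx_def diag_poly_def by (intro continuous_intros)
qed

lemma isCont_majorant_dx: "\<bar>y\<bar> < x \<Longrightarrow> isCont (\<lambda>x. majorant_dx l n x y) x"
  unfolding majorant_dx_def by (intro continuous_intros isCont_Fnk_dx)

lemma nn_integral_majorant_dxdy:
  assumes "l \<ge> 0" "0 \<le> y" "y < x"
  shows "(\<integral>\<^sup>+t. ennreal ((l + ker2 x t) * majorant l n x t) * indicator {0..y} t \<partial>lborel)
           = ennreal (majorant_dx l (Suc n) x y)"
proof -
  have "(\<integral>\<^sup>+t. ennreal ((l + ker2 x t) * majorant l n x t) * indicator {0..y} t \<partial>lborel)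
      = majorant_dx l (Suc n) x y - majorant_dx l (Suc n) x 0"
  proof (rule nn_integral_FTC_Icc)
    fix t assume "t \<in> {0..y}"
    with assms show "DERIV (majorant_dx l (Suc n) x) t :> (l + ker2 x t) * majorant l n x t"
      and "0 \<le> (l + ker2 x t) * majorant l n x t"
      by (auto intro!: DERIV_majorant_dx_y mult_nonneg_nonneg add_nonneg_nonneg majorant_nonneg ker2_nonneg)
  qed (use assms in \<open>auto simp: measurable_ident_sets\<close>)
  then show ?thesis using majorant_dx_Suc_at_0[of x l n] assms by simp
qed

lemma nn_integral_majorant_dx:
  assumes "l \<ge> 0" "0 \<le> y" "y < a"
  shows "(\<integral>\<^sup>+x. ennreal (majorant_dx l (Suc n) x y) * indicator {y<..<a} x \<partial>lborel)
           = ennreal (majorant l (Suc n) a y)"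
proof -
  let ?F = "\<lambda>x. majorant l (Suc n) x y" and ?f = "\<lambda>x. majorant_dx l (Suc n) x y"
  have at_y: "((?F \<circ> real_of_ereal) \<longlongrightarrow> 0) (at_right (ereal y))"
    unfolding ereal_tendsto_simps1 using assms by (intro tendsto_majorant_diagonal) simp
  have "isCont ?F a"
    using DERIV_majorant_x[of y a l "Suc n"] assms by (auto intro: DERIV_isCont)
  then have at_a: "((?F \<circ> real_of_ereal) \<longlongrightarrow> ?F a) (at_left (ereal a))"
    unfolding ereal_tendsto_simps1 by (simp add: isCont_def filterlim_at_split)
  have deriv: "\<And>x. ereal y < ereal x \<Longrightarrow> ereal x < ereal a \<Longrightarrow> DERIV ?F x :> ?f x"
    using assms by (auto intro!: DERIV_majorant_x)
  have cont: "\<And>x. ereal y < ereal x \<Longrightarrow> ereal x < ereal a \<Longrightarrow> isCont ?f x"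
    using assms by (auto intro!: isCont_majorant_dx)
  have nonneg: "AE x in lborel. ereal y < ereal x \<longrightarrow> ereal x < ereal a \<longrightarrow> 0 \<le> ?f x"
    using assms by (auto intro: majorant_dx_Suc_nonneg)
  have "ereal y < ereal a" using assms by simp
  note FTC = interval_integral_FTC_nonneg[OF this deriv cont nonneg at_y at_a]
  have "set_integrable lborel {y<..<a} ?f"
    using FTC(1) by simp
  then have "(\<integral>\<^sup>+x. ennreal (?f x) * indicator {y<..<a} x \<partial>lborel)
      = ennreal (set_lebesgue_integral lborel {y<..<a} ?f)"
    unfolding set_lebesgue_integral_def nn_integral_set_ennreal using assms
    by (subst nn_integral_eq_integral)
       (auto simp: mult_ac set_integrable_def indicator_def intro!: majorant_dx_Suc_nonneg)
  also have "set_lebesgue_integral lborel {y<..<a} ?f = ?F a"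
    using FTC(2) assms by (simp add: interval_lebesgue_integral_def)
  finally show ?thesis .
qed

definition double_nn_integral :: "(real \<Rightarrow> real \<Rightarrow> real) \<Rightarrow> real \<Rightarrow> real \<Rightarrow> ennreal" where
  "double_nn_integral H x y =
     (\<integral>\<^sup>+\<eta>. (\<integral>\<^sup>+\<sigma>. ennreal (H \<eta> \<sigma>) * indicator {0..y} \<sigma> \<partial>lborel) * indicator {y<..<x} \<eta> \<partial>lborel)"

lemma double_nn_integral_majorant:
  assumes "l \<ge> 0" "0 \<le> y" "y \<le> a"
  shows "double_nn_integral (\<lambda>x t. (l + ker2 x t) * majorant l n x t) a y = ennreal (majorant l (Suc n) a y)"
proof (cases "y = a")
  case True
  then show ?thesis by (simp add: majorant_def Fnk_def double_nn_integral_def)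
next
  case False
  have "(\<integral>\<^sup>+x. (\<integral>\<^sup>+t. ennreal ((l + ker2 x t) * majorant l n x t) * indicator {0..y} t \<partial>lborel)
                  * indicator {y<..<a} x \<partial>lborel)
      = (\<integral>\<^sup>+x. ennreal (majorant_dx l (Suc n) x y) * indicator {y<..<a} x \<partial>lborel)"
  proof (rule nn_integral_cong)
    fix x
    show "(\<integral>\<^sup>+t. ennreal ((l + ker2 x t) * majorant l n x t) * indicator {0..y} t \<partial>lborel) * indicator {y<..<a} x
        = ennreal (majorant_dx l (Suc n) x y) * indicator {y<..<a} x"
      using nn_integral_majorant_dxdy[OF assms(1,2), of x n] by (cases "x \<in> {y<..<a}") auto
  qed
  also have "\<dots> = ennreal (majorant l (Suc n) a y)"
    using assms False by (intro nn_integral_majorant_dx) auto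
  finally show ?thesis unfolding double_nn_integral_def .
qed

section \<open>Measurability of the iterates\<close>

lemma borel_measurable_interval_lebesgue_integral [measurable (raw)]:
  fixes f :: "'a \<Rightarrow> real \<Rightarrow> real" and a b :: "'a \<Rightarrow> ereal"
  assumes [measurable]: "(\<lambda>q. f (fst q) (snd q)) \<in> borel_measurable (M \<Otimes>\<^sub>M lborel)"
    and [measurable]: "a \<in> borel_measurable M" "b \<in> borel_measurable M"
  shows "(\<lambda>p. LBINT x=a p..b p. f p x) \<in> borel_measurable M"
proof -
  have [measurable]: "(\<lambda>p. \<integral>x. indicator (einterval (a p) (b p)) x *\<^sub>R f p x \<partial>lborel) \<in> borel_measurable M"
    and [measurable]: "(\<lambda>p. \<integral>x. indicator (einterval (b p) (a p)) x *\<^sub>R f p x \<partial>lborel) \<in> borel_measurable M"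
    by (intro lborel.borel_measurable_lebesgue_integral; unfold einterval_def indicator_def mem_Collect_eq;
        measurable)+
  show ?thesis
    unfolding interval_lebesgue_integral_def set_lebesgue_integral_def by measurable
qed

lemma ker1_measurable [measurable (raw)]:
  assumes [measurable]: "lam \<in> borel_measurable borel" "f \<in> borel_measurable M" "g \<in> borel_measurable M"
  shows "(\<lambda>x. ker1 \<epsilon> lam (f x) (g x)) \<in> borel_measurable M"
  unfolding ker1_def by measurable

lemma G_measurable:
  assumes [measurable]: "lam \<in> borel_measurable borel"
  shows "(\<lambda>q. G \<epsilon> lam k (fst q) (snd q)) \<in> borel_measurable (borel \<Otimes>\<^sub>M borel)"
proof (induction k)
  case (Suc k)
  have [measurable (raw)]: "(\<lambda>x. G \<epsilon> lam k (f x) (g x)) \<in> borel_measurable M"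
    if "f \<in> borel_measurable M" "g \<in> borel_measurable M" for f g and M :: "'b measure"
    using measurable_compose[OF measurable_Pair[OF that] Suc.IH] by simp
  show ?case by simp measurable
qed simp

lemma G_measurable_comp [measurable (raw)]:
  assumes "lam \<in> borel_measurable borel" "f \<in> borel_measurable M" "g \<in> borel_measurable M"
  shows "(\<lambda>x. G \<epsilon> lam k (f x) (g x)) \<in> borel_measurable M"
  using measurable_compose[OF measurable_Pair[OF assms(2,3)] G_measurable[OF assms(1)]] by simp

section \<open>Bounds on the iterates\<close>

lemma Tprime_rectangle_subset:
  assumes "(x, y) \<in> Tprime R"
  shows "{y..x} \<times> {0..y} \<subseteq> Tprime R"
  using assms by (auto simp: Tprime_def)

lemma abs_ker1_le:
  assumes "\<epsilon> > 0" "\<forall>\<rho>\<in>{0..R}. \<bar>lam \<rho>\<bar> / (4 * \<epsilon>) \<le> l" "(\<eta>, \<sigma>) \<in> Tprime R"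
  shows "\<bar>ker1 \<epsilon> lam \<eta> \<sigma>\<bar> \<le> l"
proof -
  have "(\<eta> - \<sigma>) / 2 \<in> {0..R}" using assms(3) by (auto simp: Tprime_def)
  then show ?thesis using assms(1,2) by (simp add: ker1_def)
qed

lemma iterated_interval_integral_cong:
  fixes f g :: "real \<Rightarrow> real \<Rightarrow> real"
  assumes "\<And>\<eta> \<sigma>. y < \<eta> \<Longrightarrow> \<eta> < x \<Longrightarrow> 0 < \<sigma> \<Longrightarrow> \<sigma> < y \<Longrightarrow> f \<eta> \<sigma> = g \<eta> \<sigma>" "0 \<le> y" "y \<le> x"
  shows "(LBINT \<eta>=y..x. (LBINT \<sigma>=0..y. f \<eta> \<sigma>)) = (LBINT \<eta>=y..x. (LBINT \<sigma>=0..y. g \<eta> \<sigma>))"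
  using assms by (intro interval_integral_cong) (auto simp: einterval_def min_def max_def)

lemma G_cong:
  assumes "\<forall>\<rho>\<in>{0..R}. lam \<rho> = lam' \<rho>" "(x, y) \<in> Tprime R"
  shows "G \<epsilon> lam k x y = G \<epsilon> lam' k x y"
  using assms(2)
proof (induction k arbitrary: x y)
  case 0
  then have "(LBINT \<rho>=y/2..x/2. lam \<rho> / (2 * \<epsilon>)) = (LBINT \<rho>=y/2..x/2. lam' \<rho> / (2 * \<epsilon>))"
    by (intro interval_integral_cong) (auto simp: Tprime_def einterval_def assms(1))
  then show ?case by simp
next
  case (Suc k)
  have ker1: "ker1 \<epsilon> lam \<eta> \<sigma> = ker1 \<epsilon> lam' \<eta> \<sigma>" and G: "G \<epsilon> lam k \<eta> \<sigma> = G \<epsilon> lam' k \<eta> \<sigma>"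
    if "y < \<eta>" "\<eta> < x" "0 < \<sigma>" "\<sigma> < y" for \<eta> \<sigma>
  proof -
    have T: "(\<eta>, \<sigma>) \<in> Tprime R" using Tprime_rectangle_subset[OF Suc.prems] that by auto
    then show "G \<epsilon> lam k \<eta> \<sigma> = G \<epsilon> lam' k \<eta> \<sigma>" by (rule Suc.IH)
    from T have "(\<eta> - \<sigma>) / 2 \<in> {0..R}" by (auto simp: Tprime_def)
    then show "ker1 \<epsilon> lam \<eta> \<sigma> = ker1 \<epsilon> lam' \<eta> \<sigma>" by (simp add: ker1_def assms(1))
  qed
  have "0 \<le> y" "y \<le> x" using Suc.prems by (auto simp: Tprime_def)
  then show ?case unfolding G.simps
    by (intro arg_cong2[where f = "(+)"] iterated_interval_integral_cong) (simp_all add: ker1 G)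
qed

text \<open>Estimates are carried out in \<open>ennreal\<close>, so no integrability needs to be known beforehand:
  a non-integrable Lebesgue integral is \<open>0\<close>.\<close>

lemma ennreal_abs_interval_integral_le:
  fixes f :: "real \<Rightarrow> real" and a b :: real
  assumes "a \<le> b"
  shows "ennreal \<bar>LBINT x=a..b. f x\<bar> \<le> (\<integral>\<^sup>+x. ennreal \<bar>f x\<bar> * indicator {a<..<b} x \<partial>lborel)"
proof (cases "integrable lborel (\<lambda>x. indicator {a<..<b} x *\<^sub>R f x)")
  case True
  have "(\<integral>\<^sup>+x. ennreal \<bar>f x\<bar> * indicator {a<..<b} x \<partial>lborel)
      = (\<integral>\<^sup>+x. ennreal (norm (indicator {a<..<b} x *\<^sub>R f x)) \<partial>lborel)"
    by (intro nn_integral_cong) (auto simp: indicator_def)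
  then show ?thesis
    using integral_norm_bound_ennreal[OF True] assms
    by (simp add: interval_lebesgue_integral_def set_lebesgue_integral_def)
next
  case False
  then show ?thesis
    using assms by (simp add: interval_lebesgue_integral_def set_lebesgue_integral_def not_integrable_integral_eq)
qed

lemma ennreal_abs_iterated_integral_le:
  fixes K H :: "real \<Rightarrow> real \<Rightarrow> real"
  assumes "0 \<le> y" "y \<le> x"
    and "\<And>\<eta> \<sigma>. y \<le> \<eta> \<Longrightarrow> \<eta> \<le> x \<Longrightarrow> 0 \<le> \<sigma> \<Longrightarrow> \<sigma> \<le> y \<Longrightarrow> \<bar>K \<eta> \<sigma>\<bar> \<le> H \<eta> \<sigma>"
  shows "ennreal \<bar>LBINT \<eta>=y..x. (LBINT \<sigma>=0..y. K \<eta> \<sigma>)\<bar> \<le> double_nn_integral H x y"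
proof -
  have inner: "ennreal \<bar>LBINT \<sigma>=0..y. K \<eta> \<sigma>\<bar> \<le> (\<integral>\<^sup>+\<sigma>. ennreal (H \<eta> \<sigma>) * indicator {0..y} \<sigma> \<partial>lborel)"
    if "\<eta> \<in> {y<..<x}" for \<eta>
  proof -
    have "ennreal \<bar>LBINT \<sigma>=0..y. K \<eta> \<sigma>\<bar> \<le> (\<integral>\<^sup>+\<sigma>. ennreal \<bar>K \<eta> \<sigma>\<bar> * indicator {0<..<y} \<sigma> \<partial>lborel)"
      using ennreal_abs_interval_integral_le[OF assms(1), of "K \<eta>"] by (simp add: zero_ereal_def)
    also have "\<dots> \<le> (\<integral>\<^sup>+\<sigma>. ennreal (H \<eta> \<sigma>) * indicator {0..y} \<sigma> \<partial>lborel)"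
      using that assms(3) by (intro nn_integral_mono) (auto simp: indicator_def intro!: ennreal_leI)
    finally show ?thesis .
  qed
  have "ennreal \<bar>LBINT \<eta>=y..x. (LBINT \<sigma>=0..y. K \<eta> \<sigma>)\<bar>
      \<le> (\<integral>\<^sup>+\<eta>. ennreal \<bar>LBINT \<sigma>=0..y. K \<eta> \<sigma>\<bar> * indicator {y<..<x} \<eta> \<partial>lborel)"
    using assms(2) by (rule ennreal_abs_interval_integral_le)
  also have "\<dots> \<le> (\<integral>\<^sup>+\<eta>. (\<integral>\<^sup>+\<sigma>. ennreal (H \<eta> \<sigma>) * indicator {0..y} \<sigma> \<partial>lborel) * indicator {y<..<x} \<eta> \<partial>lborel)"
    using inner by (intro nn_integral_mono) (auto simp: indicator_def)
  finally show ?thesis unfolding double_nn_integral_def .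
qed

lemma double_nn_integral_majorant_split:
  assumes "l \<ge> 0" "0 \<le> y" "y \<le> x"
  shows "double_nn_integral (\<lambda>\<eta> \<sigma>. l * majorant l k \<eta> \<sigma>) x y
           + double_nn_integral (\<lambda>\<eta> \<sigma>. ker2 \<eta> \<sigma> * majorant l k \<eta> \<sigma>) x y
         = ennreal (majorant l (Suc k) x y)"
proof -
  have add_inner: "(\<integral>\<^sup>+\<sigma>. ennreal (l * majorant l k \<eta> \<sigma>) * indicator {0..y} \<sigma> \<partial>lborel)
        + (\<integral>\<^sup>+\<sigma>. ennreal (ker2 \<eta> \<sigma> * majorant l k \<eta> \<sigma>) * indicator {0..y} \<sigma> \<partial>lborel)
      = (\<integral>\<^sup>+\<sigma>. ennreal ((l + ker2 \<eta> \<sigma>) * majorant l k \<eta> \<sigma>) * indicator {0..y} \<sigma> \<partial>lborel)"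
    if "y < \<eta>" for \<eta>
    using assms that
    by (subst nn_integral_add[symmetric], simp, simp, intro nn_integral_cong)
       (auto simp: indicator_def distrib_right ker2_nonneg majorant_nonneg simp flip: ennreal_plus)
  show ?thesis
    unfolding double_nn_integral_def
    by (subst nn_integral_add[symmetric], simp, simp,
        subst double_nn_integral_majorant[OF assms, symmetric], unfold double_nn_integral_def,
        intro nn_integral_cong)
       (auto split: split_indicator simp: add_inner simp flip: distrib_right)
qed

lemma abs_G_integrands_le:
  assumes "\<epsilon> > 0" "l \<ge> 0" "\<forall>\<rho>\<in>{0..R}. \<bar>lam \<rho>\<bar> / (4 * \<epsilon>) \<le> l" "(\<eta>, \<sigma>) \<in> Tprime R"
    and "\<bar>G \<epsilon> lam k \<eta> \<sigma>\<bar> \<le> majorant l k \<eta> \<sigma>"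
  shows "\<bar>ker1 \<epsilon> lam \<eta> \<sigma> * G \<epsilon> lam k \<eta> \<sigma>\<bar> \<le> l * majorant l k \<eta> \<sigma>"
    and "\<bar>ker2 \<eta> \<sigma> * G \<epsilon> lam k \<eta> \<sigma>\<bar> \<le> ker2 \<eta> \<sigma> * majorant l k \<eta> \<sigma>"
  using abs_ker1_le[OF assms(1,3,4)] assms(2,4,5)
  by (simp_all add: abs_mult mult_mono mult_left_mono ker2_nonneg Tprime_def)

lemma abs_G_0_le_majorant:
  assumes "\<epsilon> > 0" "l \<ge> 0" "\<forall>\<rho>\<in>{0..R}. \<bar>lam \<rho>\<bar> / (4 * \<epsilon>) \<le> l" "(x, y) \<in> Tprime R"
  shows "\<bar>G \<epsilon> lam 0 x y\<bar> \<le> majorant l 0 x y"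
proof -
  from assms(4) have "0 \<le> y" "y \<le> x" "x \<le> 2 * R" by (auto simp: Tprime_def)
  have "ennreal \<bar>G \<epsilon> lam 0 x y\<bar> = ennreal \<bar>LBINT \<rho>=y/2..x/2. lam \<rho> / (2 * \<epsilon>)\<bar>"
    by simp
  also have "\<dots> \<le> (\<integral>\<^sup>+\<rho>. ennreal \<bar>lam \<rho> / (2 * \<epsilon>)\<bar> * indicator {y/2<..<x/2} \<rho> \<partial>lborel)"
    using \<open>y \<le> x\<close> by (intro ennreal_abs_interval_integral_le) simp
  also have "\<dots> \<le> (\<integral>\<^sup>+\<rho>. ennreal (2 * l) * indicator {y/2<..<x/2} \<rho> \<partial>lborel)"
  proof (intro nn_integral_mono)
    fix \<rho>
    have "\<bar>lam \<rho> / (2 * \<epsilon>)\<bar> \<le> 2 * l" if "\<rho> \<in> {y/2<..<x/2}"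
      using bspec[OF assms(3), of \<rho>] that \<open>0 \<le> y\<close> \<open>x \<le> 2 * R\<close> assms(1) by (auto simp: field_simps)
    then show "ennreal \<bar>lam \<rho> / (2 * \<epsilon>)\<bar> * indicator {y/2<..<x/2} \<rho> \<le> ennreal (2 * l) * indicator {y/2<..<x/2} \<rho>"
      by (auto simp: indicator_def intro!: ennreal_leI)
  qed
  also have "\<dots> = ennreal (2 * l) * ennreal (x / 2 - y / 2)"
    using \<open>y \<le> x\<close> by (simp add: nn_integral_cmult_indicator)
  also have "\<dots> = ennreal (majorant l 0 x y)"
    using \<open>y \<le> x\<close> assms(2) by (simp add: majorant_0 ennreal_mult[symmetric] algebra_simps)
  finally show ?thesis
    using \<open>y \<le> x\<close> assms(2) by (simp add: majorant_0)
qed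

lemma abs_G_le_majorant:
  assumes "\<epsilon> > 0" "l \<ge> 0" "\<forall>\<rho>\<in>{0..R}. \<bar>lam \<rho>\<bar> / (4 * \<epsilon>) \<le> l" "(x, y) \<in> Tprime R"
  shows "\<bar>G \<epsilon> lam k x y\<bar> \<le> majorant l k x y"
  using assms(4)
proof (induction k arbitrary: x y)
  case 0
  show ?case using assms(1-3) 0 by (rule abs_G_0_le_majorant)
next
  case (Suc k)
  then have "0 \<le> y" "y \<le> x" by (auto simp: Tprime_def)
  have T: "(\<eta>, \<sigma>) \<in> Tprime R" if "y \<le> \<eta>" "\<eta> \<le> x" "0 \<le> \<sigma>" "\<sigma> \<le> y" for \<eta> \<sigma>
    using Tprime_rectangle_subset[OF Suc.prems] that by auto
  let ?I1 = "LBINT \<eta>=y..x. (LBINT \<sigma>=0..y. ker1 \<epsilon> lam \<eta> \<sigma> * G \<epsilon> lam k \<eta> \<sigma>)"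
  let ?I2 = "LBINT \<eta>=y..x. (LBINT \<sigma>=0..y. ker2 \<eta> \<sigma> * G \<epsilon> lam k \<eta> \<sigma>)"
  have "ennreal \<bar>?I1\<bar> + ennreal \<bar>?I2\<bar> \<le> ennreal (majorant l (Suc k) x y)"
    unfolding double_nn_integral_majorant_split[OF assms(2) \<open>0 \<le> y\<close> \<open>y \<le> x\<close>, symmetric]
    using abs_G_integrands_le[OF assms(1-3) T Suc.IH[OF T]] \<open>0 \<le> y\<close> \<open>y \<le> x\<close>
    by (intro add_mono ennreal_abs_iterated_integral_le)
  then have "\<bar>?I1\<bar> + \<bar>?I2\<bar> \<le> majorant l (Suc k) x y"
    using majorant_nonneg[OF assms(2) \<open>0 \<le> y\<close> \<open>y \<le> x\<close>] by (simp add: ennreal_plus[symmetric] del: ennreal_plus)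
  then show ?case by simp
qed

section \<open>Absolute convergence of the defining integrals\<close>

lemma nn_integral_rectangle_majorant_kernel:
  assumes "l \<ge> 0" "0 \<le> y" "y \<le> a"
  shows "(\<integral>\<^sup>+q. ennreal ((l + ker2 (fst q) (snd q)) * majorant l k (fst q) (snd q))
                 * indicator ({y..a} \<times> {0..y}) q \<partial>lborel) = ennreal (majorant l (Suc k) a y)"
proof -
  let ?W = "\<lambda>\<eta> \<sigma>. ennreal ((l + ker2 \<eta> \<sigma>) * majorant l k \<eta> \<sigma>)"
  have "(\<integral>\<^sup>+q. ?W (fst q) (snd q) * indicator ({y..a} \<times> {0..y}) q \<partial>lborel)
      = (\<integral>\<^sup>+\<eta>. (\<integral>\<^sup>+\<sigma>. ?W \<eta> \<sigma> * indicator ({y..a} \<times> {0..y}) (\<eta>, \<sigma>) \<partial>lborel) \<partial>lborel)"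
    unfolding lborel_prod[symmetric] by (subst lborel.nn_integral_fst[symmetric]) simp_all
  also have "\<dots> = (\<integral>\<^sup>+\<eta>. (\<integral>\<^sup>+\<sigma>. ?W \<eta> \<sigma> * indicator {0..y} \<sigma> \<partial>lborel) * indicator {y..a} \<eta> \<partial>lborel)"
    by (intro nn_integral_cong) (auto simp: indicator_times split: split_indicator)
  also have "\<dots> = (\<integral>\<^sup>+\<eta>. (\<integral>\<^sup>+\<sigma>. ?W \<eta> \<sigma> * indicator {0..y} \<sigma> \<partial>lborel) * indicator {y<..<a} \<eta> \<partial>lborel)"
    using AE_lborel_singleton[of y] AE_lborel_singleton[of a]
    by (intro nn_integral_cong_AE) (auto split: split_indicator)
  also have "\<dots> = ennreal (majorant l (Suc k) a y)"
    using double_nn_integral_majorant[OF assms] by (simp add: double_nn_integral_def)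
  finally show ?thesis .
qed

lemma set_integrable_majorant_kernel:
  assumes "l \<ge> 0" "0 \<le> y" "y \<le> a"
  shows "set_integrable lborel ({y..a} \<times> {0..y}) (\<lambda>(\<eta>, \<sigma>). (l + ker2 \<eta> \<sigma>) * majorant l k \<eta> \<sigma>)"
  unfolding set_integrable_def
proof (rule integrableI_nonneg)
  let ?S = "{y..a} \<times> {0..y}"
  have "(\<integral>\<^sup>+q. ennreal (indicator ?S q *\<^sub>R (case q of (\<eta>, \<sigma>) \<Rightarrow> (l + ker2 \<eta> \<sigma>) * majorant l k \<eta> \<sigma>)) \<partial>lborel)
      = ennreal (majorant l (Suc k) a y)"
    unfolding nn_integral_rectangle_majorant_kernel[OF assms, symmetric]
    by (intro nn_integral_cong) (auto split: split_indicator)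
  then show "(\<integral>\<^sup>+q. ennreal (indicator ?S q *\<^sub>R (case q of (\<eta>, \<sigma>) \<Rightarrow> (l + ker2 \<eta> \<sigma>) * majorant l k \<eta> \<sigma>)) \<partial>lborel) < \<infinity>"
    by simp
  show "AE q in lborel. 0 \<le> indicator ?S q *\<^sub>R (case q of (\<eta>, \<sigma>) \<Rightarrow> (l + ker2 \<eta> \<sigma>) * majorant l k \<eta> \<sigma>)"
    using assms by (auto split: split_indicator intro!: mult_nonneg_nonneg add_nonneg_nonneg ker2_nonneg majorant_nonneg)
qed (simp add: lborel_prod[symmetric])

lemma set_integrable_G_integrands:
  assumes [measurable]: "lam \<in> borel_measurable borel"
    and "\<epsilon> > 0" "l \<ge> 0" "\<forall>\<rho>\<in>{0..R}. \<bar>lam \<rho>\<bar> / (4 * \<epsilon>) \<le> l" "(x, y) \<in> Tprime R"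
  shows "set_integrable lborel ({y..x} \<times> {0..y}) (\<lambda>(\<eta>, \<sigma>). ker1 \<epsilon> lam \<eta> \<sigma> * G \<epsilon> lam k \<eta> \<sigma>)"
    and "set_integrable lborel ({y..x} \<times> {0..y}) (\<lambda>(\<eta>, \<sigma>). ker2 \<eta> \<sigma> * G \<epsilon> lam k \<eta> \<sigma>)"
proof -
  let ?S = "{y..x} \<times> {0..y}"
  have "0 \<le> y" "y \<le> x" using assms(5) by (auto simp: Tprime_def)
  note dominant = set_integrable_majorant_kernel[OF assms(3) this, of k]
  have bounds: "\<bar>ker1 \<epsilon> lam \<eta> \<sigma> * G \<epsilon> lam k \<eta> \<sigma>\<bar> \<le> \<bar>(l + ker2 \<eta> \<sigma>) * majorant l k \<eta> \<sigma>\<bar>"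
    "\<bar>ker2 \<eta> \<sigma> * G \<epsilon> lam k \<eta> \<sigma>\<bar> \<le> \<bar>(l + ker2 \<eta> \<sigma>) * majorant l k \<eta> \<sigma>\<bar>"
    if "(\<eta>, \<sigma>) \<in> ?S" for \<eta> \<sigma>
  proof -
    have T: "(\<eta>, \<sigma>) \<in> Tprime R" using Tprime_rectangle_subset[OF assms(5)] that by auto
    then have "0 \<le> \<sigma>" "\<sigma> \<le> \<eta>" by (auto simp: Tprime_def)
    with assms(3) have "ker2 \<eta> \<sigma> \<ge> 0" "majorant l k \<eta> \<sigma> \<ge> 0"
      by (auto intro: ker2_nonneg majorant_nonneg)
    with assms(3) have "l * majorant l k \<eta> \<sigma> \<le> \<bar>(l + ker2 \<eta> \<sigma>) * majorant l k \<eta> \<sigma>\<bar>"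
      "ker2 \<eta> \<sigma> * majorant l k \<eta> \<sigma> \<le> \<bar>(l + ker2 \<eta> \<sigma>) * majorant l k \<eta> \<sigma>\<bar>"
      by (auto intro: mult_right_mono)
    with abs_G_integrands_le[OF assms(2-4) T abs_G_le_majorant[OF assms(2-4) T, where k = k]]
    show "\<bar>ker1 \<epsilon> lam \<eta> \<sigma> * G \<epsilon> lam k \<eta> \<sigma>\<bar> \<le> \<bar>(l + ker2 \<eta> \<sigma>) * majorant l k \<eta> \<sigma>\<bar>"
      "\<bar>ker2 \<eta> \<sigma> * G \<epsilon> lam k \<eta> \<sigma>\<bar> \<le> \<bar>(l + ker2 \<eta> \<sigma>) * majorant l k \<eta> \<sigma>\<bar>"
      by linarith+
  qed
  show "set_integrable lborel ?S (\<lambda>(\<eta>, \<sigma>). ker1 \<epsilon> lam \<eta> \<sigma> * G \<epsilon> lam k \<eta> \<sigma>)"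
    by (rule set_integrable_bound[OF dominant])
       (auto simp: set_borel_measurable_def lborel_prod[symmetric] bounds(1))
  show "set_integrable lborel ?S (\<lambda>(\<eta>, \<sigma>). ker2 \<eta> \<sigma> * G \<epsilon> lam k \<eta> \<sigma>)"
    by (rule set_integrable_bound[OF dominant])
       (auto simp: set_borel_measurable_def lborel_prod[symmetric] bounds(2))
qed

text \<open>On \<open>T'\<close> the iterates only see \<open>lam\<close> on \<open>[0, R]\<close> (\<open>G_cong\<close>), so \<open>lam\<close> may be replaced by its
  continuous, hence Borel measurable, extension to the whole line.\<close>

lemma set_integrable_G_integrands_continuous:
  assumes "continuous_on {0..R} lam"
    and "\<epsilon> > 0" "l \<ge> 0" "\<forall>\<rho>\<in>{0..R}. \<bar>lam \<rho>\<bar> / (4 * \<epsilon>) \<le> l" "(x, y) \<in> Tprime R"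
  shows "set_integrable lborel ({y..x} \<times> {0..y}) (\<lambda>(\<eta>, \<sigma>). ker1 \<epsilon> lam \<eta> \<sigma> * G \<epsilon> lam k \<eta> \<sigma>)"
    and "set_integrable lborel ({y..x} \<times> {0..y}) (\<lambda>(\<eta>, \<sigma>). ker2 \<eta> \<sigma> * G \<epsilon> lam k \<eta> \<sigma>)"
proof -
  let ?lam = "ext_cont lam 0 R"
  have same: "\<forall>\<rho>\<in>{0..R}. lam \<rho> = ?lam \<rho>"
    by (simp add: cbox_interval)
  have "continuous_on UNIV ?lam"
    using assms(1) by (intro continuous_on_ext_cont) (simp add: cbox_interval)
  then have "?lam \<in> borel_measurable borel"
    by (rule borel_measurable_continuous_onI)
  have "\<forall>\<rho>\<in>{0..R}. \<bar>?lam \<rho>\<bar> / (4 * \<epsilon>) \<le> l"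
    using same assms(4) by simp
  note integrable = set_integrable_G_integrands[OF \<open>?lam \<in> borel_measurable borel\<close> assms(2,3) this assms(5), where k = k]
  have ker1: "ker1 \<epsilon> lam \<eta> \<sigma> * G \<epsilon> lam k \<eta> \<sigma> = ker1 \<epsilon> ?lam \<eta> \<sigma> * G \<epsilon> ?lam k \<eta> \<sigma>"
    and ker2: "ker2 \<eta> \<sigma> * G \<epsilon> lam k \<eta> \<sigma> = ker2 \<eta> \<sigma> * G \<epsilon> ?lam k \<eta> \<sigma>"
    if "(\<eta>, \<sigma>) \<in> {y..x} \<times> {0..y}" for \<eta> \<sigma>
  proof -
    have T: "(\<eta>, \<sigma>) \<in> Tprime R" using Tprime_rectangle_subset[OF assms(5)] that by auto
    then have "(\<eta> - \<sigma>) / 2 \<in> {0..R}" by (auto simp: Tprime_def)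
    with G_cong[OF same T] same
    show "ker1 \<epsilon> lam \<eta> \<sigma> * G \<epsilon> lam k \<eta> \<sigma> = ker1 \<epsilon> ?lam \<eta> \<sigma> * G \<epsilon> ?lam k \<eta> \<sigma>"
      and "ker2 \<eta> \<sigma> * G \<epsilon> lam k \<eta> \<sigma> = ker2 \<eta> \<sigma> * G \<epsilon> ?lam k \<eta> \<sigma>"
      by (simp_all add: ker1_def)
  qed
  show "set_integrable lborel ({y..x} \<times> {0..y}) (\<lambda>(\<eta>, \<sigma>). ker1 \<epsilon> lam \<eta> \<sigma> * G \<epsilon> lam k \<eta> \<sigma>)"
    using integrable(1) by (subst set_integrable_cong[OF refl refl]) (auto simp: ker1)
  show "set_integrable lborel ({y..x} \<times> {0..y}) (\<lambda>(\<eta>, \<sigma>). ker2 \<eta> \<sigma> * G \<epsilon> lam k \<eta> \<sigma>)"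
    using integrable(2) by (subst set_integrable_cong[OF refl refl]) (auto simp: ker2)
qed

theorem lemma3:
  fixes \<epsilon> R :: real and lam :: "real \<Rightarrow> real"
  assumes "\<epsilon> > 0" and "R > 0" and "continuous_on {0..R} lam"
  defines "lbar \<equiv> (SUP \<rho>\<in>{0..R}. \<bar>lam \<rho>\<bar> / (4 * \<epsilon>))"
  shows "(\<forall>\<alpha> \<beta>. (\<alpha>, \<beta>) \<in> Tprime R \<longrightarrow> \<bar>G \<epsilon> lam 0 \<alpha> \<beta>\<bar> \<le> Fnk lbar 0 0 \<alpha> \<beta>)
       \<and> (\<forall>n \<ge> 1. \<forall>\<alpha> \<beta>. (\<alpha>, \<beta>) \<in> Tprime R \<longrightarrow>
            set_integrable lborel ({\<beta>..\<alpha>} \<times> {0..\<beta>})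
              (\<lambda>(\<eta>, \<sigma>). ker1 \<epsilon> lam \<eta> \<sigma> * G \<epsilon> lam (n - 1) \<eta> \<sigma>)
          \<and> set_integrable lborel ({\<beta>..\<alpha>} \<times> {0..\<beta>})
              (\<lambda>(\<eta>, \<sigma>). ker2 \<eta> \<sigma> * G \<epsilon> lam (n - 1) \<eta> \<sigma>)
          \<and> \<bar>G \<epsilon> lam n \<alpha> \<beta>\<bar> \<le> Fnk lbar n 0 \<alpha> \<beta>
               + (\<Sum>i<n. \<Sum>j=1..n-i. real (Cat (n - i) j) / 4 ^ (n - i) * Fnk lbar i j \<alpha> \<beta>))"
proof -
  have "bdd_above ((\<lambda>\<rho>. \<bar>lam \<rho>\<bar> / (4 * \<epsilon>)) ` {0..R})"
    using assms(1,3) by (intro bounded_imp_bdd_above compact_imp_bounded compact_continuous_image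
        continuous_intros compact_Icc) auto
  then have bound: "\<forall>\<rho>\<in>{0..R}. \<bar>lam \<rho>\<bar> / (4 * \<epsilon>) \<le> lbar"
    unfolding lbar_def by (auto intro: cSUP_upper)
  have "lbar \<ge> 0"
    using bound assms(1,2) by (auto intro: order_trans[of 0 "\<bar>lam 0\<bar> / (4 * \<epsilon>)"])
  note majorant_bound = abs_G_le_majorant[OF assms(1) this bound, unfolded majorant_eq_Fnk_sum]
  note integrable = set_integrable_G_integrands_continuous[OF assms(3,1) \<open>lbar \<ge> 0\<close> bound]
  show ?thesis
    using majorant_bound[where k = 0, unfolded lessThan_0 sum.empty add_0_right] majorant_bound integrable by blast
qed

end
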